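(* For every digraph $X$, $\lambda_1(X)\le \rho(X)\le 3\lambda_1(X)$. Both inequalities are tight, i.e., each holds with equality for some digraph with at least one arc.
   Context: A digraph $X$ has a finite vertex set $V(X)$ and an arc set $E(X)$ of ordered pairs of distinct vertices; $\{x,y\}$ is a digon if both $xy$ and $yx$ are arcs. The Hermitian adjacency matrix $H(X)$ has $(u,v)$-entry $1$ if $uv$ and $vu$ are arcs, $i$ if $uv$ is an arc and $vu$ is not, $-i$ if $vu$ is an arc and $uv$ is not, and $0$ otherwise. $H(X)$ is Hermitian, so its eigenvalues are real; $\lambda_1(X)$ denotes the largest eigenvalue of $H(X)$ and $\rho(X)$ the maximum absolute value of an eigenvalue of $H(X)$. *)

theory Defs
  imports "Jordan_Normal_Form.Char_Poly"
begin

definition digraph :: "nat \<Rightarrow> (nat \<times> nat) set \<Rightarrow> bool" where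
  "digraph n E \<longleftrightarrow> E \<subseteq> {0..<n} \<times> {0..<n} \<and> (\<forall>x. (x, x) \<notin> E)"

definition herm_adj :: "nat \<Rightarrow> (nat \<times> nat) set \<Rightarrow> complex mat" where
  "herm_adj n E = mat n n (\<lambda>(u, v).
      if (u, v) \<in> E \<and> (v, u) \<in> E then 1
      else if (u, v) \<in> E then \<i>
      else if (v, u) \<in> E then - \<i>
      else 0)"

text \<open>Largest eigenvalue of H(X) (eigenvalues of a Hermitian matrix are real).\<close>
definition lambda1 :: "nat \<Rightarrow> (nat \<times> nat) set \<Rightarrow> real" where
  "lambda1 n E = Max {x :: real. eigenvalue (herm_adj n E) (complex_of_real x)}"

definition rho :: "nat \<Rightarrow> (nat \<times> nat) set \<Rightarrow> real" where
  "rho n E = Max {\<bar>x\<bar> | x :: real. eigenvalue (herm_adj n E) (complex_of_real x)}"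

end

theory Submission
  imports Defs
begin

text \<open>
  The largest eigenvalue of a Hermitian matrix \<open>H\<close> is the maximum of its Rayleigh quotient
  \<open>q(w)/\<parallel>w\<parallel>\<^sup>2\<close>, where \<open>q(w) = w\<^sup>* H w\<close>; this gives \<open>\<lambda>\<^sub>1 \<le> \<rho>\<close> at once. For \<open>\<rho> \<le> 3\<lambda>\<^sub>1\<close> let \<open>f\<close> be an
  eigenvector for a negative eigenvalue \<open>\<mu>\<close>. Every entry \<open>c\<close> of \<open>H(X)\<close> lies in \<open>{0, 1, i, -i}\<close>,
  and for such \<open>c\<close> one has \<open>2 Re(|a| c |b|) + Re(a c b\<^sup>*) + Re(a\<^sup>* c b) \<ge> 0\<close>. Summing over the
  entries gives \<open>2 q(|f|) + q(f\<^sup>*) + q(f) \<ge> 0\<close>, and each of the first two terms is at most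
  \<open>\<lambda>\<^sub>1 \<parallel>f\<parallel>\<^sup>2\<close> while \<open>q(f) = \<mu> \<parallel>f\<parallel>\<^sup>2\<close>; hence \<open>-\<mu> \<le> 3\<lambda>\<^sub>1\<close>.
  Equality holds for a single digon (spectrum \<open>\<plusminus>1\<close>) and for the directed 4-cycle with both
  diagonals turned into digons (spectrum \<open>1, 1, 1, -3\<close>).

  The supremum \<open>m\<close> of the Rayleigh quotient is an eigenvalue because the shifted matrix \<open>G = m I - H\<close> is positive semidefinite, Cauchy--Schwarz for its form gives
  \<open>\<parallel>G w\<parallel>\<^sup>2 \<le> C \<cdot> w\<^sup>* G w\<close>, and \<open>w\<^sup>* G w\<close> gets arbitrarily small on the unit sphere, so \<open>G\<close> cannot
  have a bounded inverse.
\<close>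

definition matvec :: "nat \<Rightarrow> (nat \<Rightarrow> nat \<Rightarrow> complex) \<Rightarrow> (nat \<Rightarrow> complex) \<Rightarrow> nat \<Rightarrow> complex" where
  "matvec n h w i = (\<Sum>j<n. h i j * w j)"

definition sesq :: "nat \<Rightarrow> (nat \<Rightarrow> nat \<Rightarrow> complex) \<Rightarrow> (nat \<Rightarrow> complex) \<Rightarrow> (nat \<Rightarrow> complex) \<Rightarrow> complex" where
  "sesq n h u v = (\<Sum>i<n. \<Sum>j<n. cnj (u i) * h i j * v j)"

definition sqnorm :: "nat \<Rightarrow> (nat \<Rightarrow> complex) \<Rightarrow> real" where
  "sqnorm n w = (\<Sum>i<n. (cmod (w i))\<^sup>2)"

definition hermitian :: "nat \<Rightarrow> (nat \<Rightarrow> nat \<Rightarrow> complex) \<Rightarrow> bool" where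
  "hermitian n h \<longleftrightarrow> (\<forall>i<n. \<forall>j<n. h j i = cnj (h i j))"

definition basis_fun :: "nat \<Rightarrow> nat \<Rightarrow> complex" where
  "basis_fun k i = (if i = k then 1 else 0)"

definition mat_entries :: "'a mat \<Rightarrow> nat \<Rightarrow> nat \<Rightarrow> 'a" where
  "mat_entries A i j = A $$ (i, j)"

subsection \<open>Sesquilinear forms on \<open>\<complex>\<^sup>n\<close>\<close>

lemma cnj_mult_self: "cnj z * z = complex_of_real ((cmod z)\<^sup>2)"
  by (metis complex_norm_square mult.commute of_real_power)

lemma sum_cnj_mult_self: "(\<Sum>i<n. cnj (w i) * w i) = complex_of_real (sqnorm n w)"
  unfolding sqnorm_def by (simp add: cnj_mult_self)

lemma sesq_matvec: "sesq n h u v = (\<Sum>i<n. cnj (u i) * matvec n h v i)"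
  unfolding sesq_def matvec_def by (simp add: sum_distrib_left mult.assoc)

lemma sesq_swap:
  assumes "hermitian n h"
  shows "sesq n h v u = cnj (sesq n h u v)"
proof -
  have "cnj (sesq n h u v) = (\<Sum>i<n. \<Sum>j<n. u i * cnj (h i j) * cnj (v j))"
    unfolding sesq_def by simp
  also have "\<dots> = (\<Sum>i<n. \<Sum>j<n. cnj (v j) * h j i * u i)"
  proof (intro sum.cong refl)
    fix i j assume "i \<in> {..<n}" "j \<in> {..<n}"
    then have "h j i = cnj (h i j)" using assms unfolding hermitian_def by blast
    then show "u i * cnj (h i j) * cnj (v j) = cnj (v j) * h j i * u i" by simp
  qed
  also have "\<dots> = sesq n h v u"
    unfolding sesq_def by (rule sum.swap)
  finally show ?thesis by simp
qed

lemma sesq_add_scaled: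
  "sesq n h (\<lambda>i. u i + s * v i) (\<lambda>i. u i + s * v i)
     = sesq n h u u + s * sesq n h u v + cnj s * sesq n h v u + (cnj s * s) * sesq n h v v"
proof -
  have expand: "cnj (u i + s * v i) * h i j * (u j + s * v j)
      = cnj (u i) * h i j * u j + s * (cnj (u i) * h i j * v j)
        + cnj s * (cnj (v i) * h i j * u j) + (cnj s * s) * (cnj (v i) * h i j * v j)" for i j
    by (simp add: algebra_simps)
  show ?thesis
    unfolding sesq_def expand by (simp only: sum.distrib sum_distrib_left[symmetric])
qed

lemma sesq_scale: "sesq n h (\<lambda>i. c * w i) (\<lambda>i. c * w i) = (cnj c * c) * sesq n h w w"
proof -
  have factor: "cnj (c * w i) * h i j * (c * w j) = (cnj c * c) * (cnj (w i) * h i j * w j)" for i j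
    by (simp add: algebra_simps)
  show ?thesis
    unfolding sesq_def factor by (simp only: sum_distrib_left)
qed

lemma sesq_eigenvector:
  assumes "\<forall>i<n. matvec n h f i = complex_of_real x * f i"
  shows "Re (sesq n h f f) = x * sqnorm n f"
proof -
  have "sesq n h f f = complex_of_real x * (\<Sum>i<n. cnj (f i) * f i)"
    unfolding sesq_matvec sum_distrib_left using assms by (intro sum.cong refl) simp
  then show ?thesis
    unfolding sum_cnj_mult_self by simp
qed

lemma sesq_basis_fun:
  assumes "k < n"
  shows "sesq n h (basis_fun k) (basis_fun k) = h k k"
proof -
  have "cnj (basis_fun k i) * h i j * basis_fun k j = (if j = k then (if i = k then h k k else 0) else 0)"
    for i j
    by (simp add: basis_fun_def)
  then show ?thesis
    unfolding sesq_def using assms by (simp add: sum.delta)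
qed

lemma sqnorm_nonneg: "0 \<le> sqnorm n w"
  unfolding sqnorm_def by (simp add: sum_nonneg)

lemma sqnorm_cong: "(\<And>i. i < n \<Longrightarrow> v i = w i) \<Longrightarrow> sqnorm n v = sqnorm n w"
  unfolding sqnorm_def by (intro sum.cong) auto

lemma sqnorm_scale: "sqnorm n (\<lambda>i. c * w i) = (cmod c)\<^sup>2 * sqnorm n w"
  unfolding sqnorm_def by (simp add: sum_distrib_left norm_mult power_mult_distrib)

lemma sqnorm_basis_fun:
  assumes "k < n"
  shows "sqnorm n (basis_fun k) = 1"
proof -
  have "(cmod (basis_fun k i))\<^sup>2 = (if i = k then 1 else 0)" for i
    by (simp add: basis_fun_def)
  then show ?thesis
    unfolding sqnorm_def using assms by (simp add: sum.delta)
qed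

lemma sqnorm_eq_0: "sqnorm n w = 0 \<Longrightarrow> i < n \<Longrightarrow> w i = 0"
  unfolding sqnorm_def by (subst (asm) sum_nonneg_eq_0_iff) auto

lemma sqnorm_pos: "\<exists>i<n. w i \<noteq> 0 \<Longrightarrow> 0 < sqnorm n w"
  using sqnorm_eq_0 sqnorm_nonneg[of n w] by force

lemma norm_sq_le_sqnorm: "i < n \<Longrightarrow> (cmod (w i))\<^sup>2 \<le> sqnorm n w"
  unfolding sqnorm_def by (intro member_le_sum) auto

lemma norm_mult_le_sqnorm:
  assumes "i < n" "j < n"
  shows "cmod (w i) * cmod (w j) \<le> sqnorm n w"
proof -
  have "cmod (w i) * cmod (w j) \<le> ((cmod (w i))\<^sup>2 + (cmod (w j))\<^sup>2) / 2"
    using sum_squares_bound[of "cmod (w i)" "cmod (w j)"] by (simp add: power2_eq_square)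
  also have "\<dots> \<le> sqnorm n w"
    using norm_sq_le_sqnorm[OF assms(1), of w] norm_sq_le_sqnorm[OF assms(2), of w] by simp
  finally show ?thesis .
qed

lemma norm_sesq_le: "cmod (sesq n h u u) \<le> (\<Sum>i<n. \<Sum>j<n. cmod (h i j)) * sqnorm n u"
proof -
  have "cmod (sesq n h u u) \<le> (\<Sum>i<n. \<Sum>j<n. cmod (cnj (u i) * h i j * u j))"
    unfolding sesq_def by (rule order_trans[OF norm_sum sum_mono]) (rule norm_sum)
  also have "\<dots> \<le> (\<Sum>i<n. \<Sum>j<n. cmod (h i j) * sqnorm n u)"
  proof (intro sum_mono)
    fix i j assume "i \<in> {..<n}" "j \<in> {..<n}"
    then have "cmod (h i j) * (cmod (u i) * cmod (u j)) \<le> cmod (h i j) * sqnorm n u"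
      by (intro mult_left_mono norm_mult_le_sqnorm) auto
    then show "cmod (cnj (u i) * h i j * u j) \<le> cmod (h i j) * sqnorm n u"
      by (simp add: norm_mult algebra_simps)
  qed
  also have "\<dots> = (\<Sum>i<n. \<Sum>j<n. cmod (h i j)) * sqnorm n u"
    by (simp only: sum_distrib_right)
  finally show ?thesis .
qed

lemma sqnorm_matvec_le: "sqnorm n (matvec n k z) \<le> (\<Sum>i<n. (\<Sum>j<n. cmod (k i j))\<^sup>2) * sqnorm n z"
proof -
  have "(cmod (matvec n k z i))\<^sup>2 \<le> (\<Sum>j<n. cmod (k i j))\<^sup>2 * sqnorm n z" for i
  proof -
    have "cmod (matvec n k z i) \<le> (\<Sum>j<n. cmod (k i j) * sqrt (sqnorm n z))"
      unfolding matvec_def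
      by (rule order_trans[OF norm_sum sum_mono])
         (simp add: norm_mult mult_left_mono norm_sq_le_sqnorm real_le_rsqrt)
    then have "(cmod (matvec n k z i))\<^sup>2 \<le> ((\<Sum>j<n. cmod (k i j)) * sqrt (sqnorm n z))\<^sup>2"
      by (simp add: power_mono sum_distrib_right)
    then show ?thesis
      using sqnorm_nonneg[of n z] by (simp add: power_mult_distrib)
  qed
  then show ?thesis
    unfolding sqnorm_def[of n "matvec n k z"] by (simp add: sum_mono sum_distrib_right)
qed

lemma quadratic_nonneg_imp_le:
  fixes a b c :: real
  assumes nonneg: "\<And>t. 0 \<le> a - 2 * t * b + t\<^sup>2 * b * c" and "0 \<le> c"
  shows "b \<le> a * c"
proof (cases "c = 0")
  case True
  show ?thesis
  proof (rule ccontr)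
    assume "\<not> b \<le> a * c"
    then have "0 < b" using True by simp
    then have "a - 2 * ((a + 1) / (2 * b)) * b = -1" by (simp add: field_simps)
    then show False using nonneg[of "(a + 1) / (2 * b)"] True by simp
  qed
next
  case False
  then have c: "0 < c" using \<open>0 \<le> c\<close> by simp
  have "a - 2 * (1 / c) * b + (1 / c)\<^sup>2 * b * c = a - b / c"
    using c by (simp add: field_simps power2_eq_square)
  then have "b / c \<le> a" using nonneg[of "1 / c"] by simp
  then show ?thesis using c by (simp add: field_simps mult.commute)
qed

lemma sesq_cauchy_schwarz:
  assumes h: "hermitian n g" and psd: "\<And>w. 0 \<le> Re (sesq n g w w)"
  shows "(cmod (sesq n g u v))\<^sup>2 \<le> Re (sesq n g u u) * Re (sesq n g v v)"
proof (rule quadratic_nonneg_imp_le)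
  define b where "b = sesq n g u v"
  fix t :: real
  define s where "s = - complex_of_real t * cnj b"
  have sb: "s * b = - complex_of_real (t * (cmod b)\<^sup>2)"
    unfolding s_def by (simp add: cnj_mult_self mult.assoc)
  have "cnj s * s = complex_of_real (t\<^sup>2) * (cnj b * b)"
    unfolding s_def by (simp add: power2_eq_square)
  then have ss: "cnj s * s = complex_of_real (t\<^sup>2 * (cmod b)\<^sup>2)"
    unfolding cnj_mult_self by simp
  have "sesq n g (\<lambda>i. u i + s * v i) (\<lambda>i. u i + s * v i)
      = sesq n g u u + s * b + cnj (s * b) + (cnj s * s) * sesq n g v v"
    unfolding sesq_add_scaled sesq_swap[OF h, of v u] b_def by simp
  then have "Re (sesq n g (\<lambda>i. u i + s * v i) (\<lambda>i. u i + s * v i))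
      = Re (sesq n g u u) - 2 * t * (cmod b)\<^sup>2 + t\<^sup>2 * (cmod b)\<^sup>2 * Re (sesq n g v v)"
    unfolding sb ss by simp
  then show "0 \<le> Re (sesq n g u u) - 2 * t * (cmod (sesq n g u v))\<^sup>2
      + t\<^sup>2 * (cmod (sesq n g u v))\<^sup>2 * Re (sesq n g v v)"
    using psd b_def by metis
qed (rule psd)

lemma sesq_matvec_self:
  assumes "hermitian n g"
  shows "sesq n g w (matvec n g w) = complex_of_real (sqnorm n (matvec n g w))"
proof -
  have "sesq n g w (matvec n g w) = (\<Sum>j<n. (\<Sum>i<n. cnj (w i) * g i j) * matvec n g w j)"
    unfolding sesq_def by (subst sum.swap) (simp add: sum_distrib_right)
  also have "\<dots> = (\<Sum>j<n. cnj (matvec n g w j) * matvec n g w j)"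
  proof (intro sum.cong refl)
    fix j assume j: "j \<in> {..<n}"
    have "cnj (matvec n g w j) = (\<Sum>i<n. cnj (g j i) * cnj (w i))"
      unfolding matvec_def by simp
    also have "\<dots> = (\<Sum>i<n. cnj (w i) * g i j)"
    proof (intro sum.cong refl)
      fix i assume "i \<in> {..<n}"
      then have "g i j = cnj (g j i)" using assms j unfolding hermitian_def by blast
      then show "cnj (g j i) * cnj (w i) = cnj (w i) * g i j" by simp
    qed
    finally show "(\<Sum>i<n. cnj (w i) * g i j) * matvec n g w j = cnj (matvec n g w j) * matvec n g w j"
      by simp
  qed
  finally show ?thesis
    unfolding sum_cnj_mult_self .
qed

text \<open>For positive semidefinite \<open>G\<close>, Cauchy--Schwarz applied to \<open>w\<close> and \<open>G w\<close>.\<close>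

lemma sqnorm_matvec_le_sesq:
  assumes h: "hermitian n g" and psd: "\<And>w. 0 \<le> Re (sesq n g w w)"
  shows "sqnorm n (matvec n g w) \<le> (\<Sum>i<n. \<Sum>j<n. cmod (g i j)) * Re (sesq n g w w)"
proof -
  define K where "K = (\<Sum>i<n. \<Sum>j<n. cmod (g i j))"
  define z where "z = matvec n g w"
  have "(sqnorm n z)\<^sup>2 = (cmod (sesq n g w z))\<^sup>2"
    unfolding z_def sesq_matvec_self[OF h] using sqnorm_nonneg by simp
  also have "\<dots> \<le> Re (sesq n g w w) * Re (sesq n g z z)"
    by (rule sesq_cauchy_schwarz[OF h psd])
  also have "\<dots> \<le> Re (sesq n g w w) * (K * sqnorm n z)"
    unfolding K_def
    by (intro mult_left_mono psd order_trans[OF complex_Re_le_cmod norm_sesq_le])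
  finally have "sqnorm n z * sqnorm n z \<le> (K * Re (sesq n g w w)) * sqnorm n z"
    by (simp add: power2_eq_square algebra_simps)
  moreover have "0 \<le> K * Re (sesq n g w w)"
    unfolding K_def using psd by (simp add: sum_nonneg)
  ultimately show ?thesis
    unfolding z_def[symmetric] K_def[symmetric]
    by (metis mult_right_le_imp_le nle_le order.strict_iff_order sqnorm_nonneg)
qed

subsection \<open>The largest eigenvalue of a Hermitian matrix\<close>

lemma mat_mult_vec_eq_matvec:
  "mat n n (\<lambda>(i, j). g i j) *\<^sub>v vec n f = vec n (matvec n g f)"
  by (intro eq_vecI) (simp_all add: scalar_prod_def matvec_def atLeast0LessThan)

lemma carrier_mult_vec_eq_matvec:
  "A \<in> carrier_mat n n \<Longrightarrow> A *\<^sub>v vec n f = vec n (matvec n (mat_entries A) f)"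
  by (intro eq_vecI) (simp_all add: scalar_prod_def matvec_def mat_entries_def atLeast0LessThan)

lemma matvec_left_inverse:
  assumes inj: "\<And>f. \<forall>i<n. matvec n g f i = 0 \<Longrightarrow> \<forall>i<n. f i = 0"
  obtains k where "\<And>f i. i < n \<Longrightarrow> matvec n k (matvec n g f) i = f i"
proof -
  define G where "G = mat n n (\<lambda>(i, j). g i j)"
  have G: "G \<in> carrier_mat n n" unfolding G_def by simp
  have G_vec: "G *\<^sub>v vec n f = vec n (matvec n g f)" for f
    unfolding G_def by (rule mat_mult_vec_eq_matvec)
  have "det G \<noteq> 0"
  proof
    assume "det G = 0"
    then obtain v where v: "v \<in> carrier_vec n" "v \<noteq> 0\<^sub>v n" "G *\<^sub>v v = 0\<^sub>v n"
      using det_0_iff_vec_prod_zero[OF G] by auto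
    have "vec n (($) v) = v" using v(1) by auto
    then have "\<forall>i<n. matvec n g (($) v) i = 0"
      using G_vec[of "($) v"] v(3) by (metis index_vec index_zero_vec(1))
    then have "v = 0\<^sub>v n" using inj v(1) by (intro eq_vecI) auto
    then show False using v(2) by simp
  qed
  from det_non_zero_imp_unit[OF G this, unfolded Units_def, of "()"]
  obtain K where K: "K \<in> carrier_mat n n" and KG: "K * G = 1\<^sub>m n"
    by (auto simp: ring_mat_def)
  show ?thesis
  proof
    fix f and i :: nat assume i: "i < n"
    have "K *\<^sub>v vec n (matvec n g f) = vec n f"
      using K G by (simp add: G_vec[symmetric] assoc_mult_mat_vec[symmetric] KG)
    then show "matvec n (mat_entries K) (matvec n g f) i = f i"
      using carrier_mult_vec_eq_matvec[OF K] i by (metis index_vec)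
  qed
qed

lemma psd_kernel_vector:
  assumes h: "hermitian n g" and psd: "\<And>w. 0 \<le> Re (sesq n g w w)"
    and small: "\<And>\<epsilon>. 0 < \<epsilon> \<Longrightarrow> \<exists>w. sqnorm n w = 1 \<and> Re (sesq n g w w) < \<epsilon>"
  obtains v where "\<exists>i<n. v i \<noteq> 0" "\<forall>i<n. matvec n g v i = 0"
proof (rule ccontr)
  assume "\<not> thesis"
  with that have "\<And>f. \<forall>i<n. matvec n g f i = 0 \<Longrightarrow> \<forall>i<n. f i = 0" by blast
  then obtain k where k: "\<And>f i. i < n \<Longrightarrow> matvec n k (matvec n g f) i = f i"
    using matvec_left_inverse by blast
  define C where "C = (\<Sum>i<n. (\<Sum>j<n. cmod (k i j))\<^sup>2)"
  define K where "K = (\<Sum>i<n. \<Sum>j<n. cmod (g i j))"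
  have CK: "0 \<le> C * K" unfolding C_def K_def by (simp add: sum_nonneg)
  obtain w where w: "sqnorm n w = 1" "Re (sesq n g w w) < 1 / (C * K + 1)"
    using small[of "1 / (C * K + 1)"] CK by auto
  have "1 = sqnorm n (matvec n k (matvec n g w))"
    using sqnorm_cong[of n "matvec n k (matvec n g w)" w] k w(1) by simp
  also have "\<dots> \<le> C * sqnorm n (matvec n g w)"
    unfolding C_def by (rule sqnorm_matvec_le)
  also have "\<dots> \<le> C * (K * Re (sesq n g w w))"
    unfolding K_def C_def by (intro mult_left_mono sqnorm_matvec_le_sesq[OF h psd]) (simp add: sum_nonneg)
  also have "\<dots> \<le> (C * K) * (1 / (C * K + 1))"
    using mult_left_mono[OF less_imp_le[OF w(2)] CK] by (simp add: mult.assoc)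
  also have "\<dots> < 1"
    using CK by (simp add: field_simps)
  finally show False by simp
qed

lemma sesq_le_of_unit_bound:
  assumes "\<And>w. sqnorm n w = 1 \<Longrightarrow> Re (sesq n h w w) \<le> m"
  shows "Re (sesq n h w w) \<le> m * sqnorm n w"
proof (cases "sqnorm n w = 0")
  case True
  then have "\<forall>i<n. w i = 0" using sqnorm_eq_0 by blast
  then have "sesq n h w w = 0" unfolding sesq_def by simp
  then show ?thesis using True by simp
next
  case False
  then have pos: "0 < sqnorm n w" using sqnorm_nonneg[of n w] by simp
  define c where "c = complex_of_real (1 / sqrt (sqnorm n w))"
  have c2: "(cmod c)\<^sup>2 = 1 / sqnorm n w"
    unfolding c_def norm_of_real using pos by (simp add: power_divide)
  have "Re (sesq n h (\<lambda>i. c * w i) (\<lambda>i. c * w i)) \<le> m"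
    using assms[of "\<lambda>i. c * w i"] unfolding sqnorm_scale c2 using pos by simp
  then have "Re (sesq n h w w) / sqnorm n w \<le> m"
    unfolding sesq_scale cnj_mult_self c2 by simp
  then show ?thesis using pos by (simp add: field_simps)
qed

definition diag_minus :: "real \<Rightarrow> (nat \<Rightarrow> nat \<Rightarrow> complex) \<Rightarrow> nat \<Rightarrow> nat \<Rightarrow> complex" where
  "diag_minus m h i j = (if i = j then complex_of_real m else 0) - h i j"

lemma matvec_diag_minus:
  assumes "i < n"
  shows "matvec n (diag_minus m h) v i = complex_of_real m * v i - matvec n h v i"
proof -
  have "diag_minus m h i j * v j = (if i = j then complex_of_real m * v j else 0) - h i j * v j" for j
    unfolding diag_minus_def by (simp add: left_diff_distrib)
  then show ?thesis
    unfolding matvec_def using assms by (simp add: sum_subtractf sum.delta)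
qed

lemma Re_sesq_diag_minus: "Re (sesq n (diag_minus m h) w w) = m * sqnorm n w - Re (sesq n h w w)"
proof -
  have "sesq n (diag_minus m h) w w = (\<Sum>i<n. complex_of_real m * (cnj (w i) * w i)) - sesq n h w w"
    unfolding sesq_matvec[of n "diag_minus m h"] sesq_matvec[of n h] sum_subtractf[symmetric]
    by (intro sum.cong refl) (simp add: matvec_diag_minus algebra_simps)
  then show ?thesis
    unfolding sum_distrib_left[symmetric] sum_cnj_mult_self by simp
qed

lemma hermitian_diag_minus:
  assumes "hermitian n h"
  shows "hermitian n (diag_minus m h)"
  unfolding hermitian_def
proof (intro allI impI)
  fix i j assume "i < n" "j < n"
  then have "h j i = cnj (h i j)" using assms unfolding hermitian_def by blast
  then show "diag_minus m h j i = cnj (diag_minus m h i j)" unfolding diag_minus_def by auto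
qed

lemma hermitian_top_eigenvector:
  assumes h: "hermitian n h" and n: "0 < n"
  obtains v m where "\<exists>i<n. v i \<noteq> 0" "\<forall>i<n. matvec n h v i = complex_of_real m * v i"
    "\<And>w. Re (sesq n h w w) \<le> m * sqnorm n w"
proof -
  define S where "S = {Re (sesq n h w w) | w. sqnorm n w = 1}"
  define m where "m = Sup S"
  have S_ne: "S \<noteq> {}"
    unfolding S_def using sqnorm_basis_fun[OF n] by blast
  have "bdd_above S"
  proof (rule bdd_aboveI)
    fix x assume "x \<in> S"
    then obtain w where "sqnorm n w = 1" "x = Re (sesq n h w w)" unfolding S_def by blast
    then show "x \<le> (\<Sum>i<n. \<Sum>j<n. cmod (h i j))"
      using order_trans[OF complex_Re_le_cmod norm_sesq_le, of n h w] by simp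
  qed
  then have le_m: "Re (sesq n h w w) \<le> m * sqnorm n w" for w
    unfolding m_def by (intro sesq_le_of_unit_bound cSup_upper) (auto simp: S_def)
  have "hermitian n (diag_minus m h)"
    by (rule hermitian_diag_minus[OF h])
  moreover have "0 \<le> Re (sesq n (diag_minus m h) w w)" for w
    using le_m[of w] Re_sesq_diag_minus[of n m h w] by simp
  moreover have "\<exists>w. sqnorm n w = 1 \<and> Re (sesq n (diag_minus m h) w w) < \<epsilon>" if "0 < \<epsilon>" for \<epsilon>
  proof -
    obtain x where "x \<in> S" "m - \<epsilon> < x"
      using less_cSupD[OF S_ne, of "m - \<epsilon>"] \<open>0 < \<epsilon>\<close> unfolding m_def by auto
    then show ?thesis
      unfolding S_def using Re_sesq_diag_minus by auto
  qed
  ultimately obtain v where "\<exists>i<n. v i \<noteq> 0" "\<forall>i<n. matvec n (diag_minus m h) v i = 0"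
    using psd_kernel_vector by blast
  then show ?thesis
    using that[of v m] le_m matvec_diag_minus by simp
qed

lemma eigenvalue_iff_vec:
  assumes A: "A \<in> carrier_mat n n"
  shows "eigenvalue A k \<longleftrightarrow> (\<exists>f. vec n f \<noteq> 0\<^sub>v n \<and> A *\<^sub>v vec n f = k \<cdot>\<^sub>v vec n f)"
proof
  assume "eigenvalue A k"
  then obtain v where v: "v \<in> carrier_vec n" "v \<noteq> 0\<^sub>v n" "A *\<^sub>v v = k \<cdot>\<^sub>v v"
    unfolding eigenvalue_def eigenvector_def using A by auto
  moreover have "vec n (($) v) = v"
    using v(1) by auto
  ultimately show "\<exists>f. vec n f \<noteq> 0\<^sub>v n \<and> A *\<^sub>v vec n f = k \<cdot>\<^sub>v vec n f"
    by (intro exI[of _ "($) v"]) simp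
next
  assume "\<exists>f. vec n f \<noteq> 0\<^sub>v n \<and> A *\<^sub>v vec n f = k \<cdot>\<^sub>v vec n f"
  then obtain f where "vec n f \<noteq> 0\<^sub>v n" "A *\<^sub>v vec n f = k \<cdot>\<^sub>v vec n f"
    by blast
  then show "eigenvalue A k"
    unfolding eigenvalue_def eigenvector_def using A by (intro exI[of _ "vec n f"]) auto
qed

lemma eigenvalue_iff_matvec:
  assumes A: "A \<in> carrier_mat n n"
  shows "eigenvalue A k \<longleftrightarrow>
    (\<exists>f. (\<exists>i<n. f i \<noteq> 0) \<and> (\<forall>i<n. matvec n (mat_entries A) f i = k * f i))"
  unfolding eigenvalue_iff_vec[OF A] carrier_mult_vec_eq_matvec[OF A] by (simp add: vec_eq_iff)

lemma finite_real_eigenvalues: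
  assumes A: "(A :: complex mat) \<in> carrier_mat n n"
  shows "finite {x :: real. eigenvalue A (complex_of_real x)}"
proof -
  have "char_poly A \<noteq> 0"
    using degree_monic_char_poly[OF A] by auto
  then have "finite {k. poly (char_poly A) k = 0}"
    by (rule poly_roots_finite)
  then have "finite (complex_of_real -` {k. poly (char_poly A) k = 0})"
    by (rule finite_vimageI) (simp add: inj_def)
  moreover have "{x :: real. eigenvalue A (complex_of_real x)}
      = complex_of_real -` {k. poly (char_poly A) k = 0}"
    using eigenvalue_root_char_poly[OF A] by auto
  ultimately show ?thesis by simp
qed

lemma eigenvalue_le_rayleigh_bound:
  assumes A: "A \<in> carrier_mat n n" and "eigenvalue A (complex_of_real x)"
    and bound: "\<And>w. Re (sesq n (mat_entries A) w w) \<le> m * sqnorm n w"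
  shows "x \<le> m"
proof -
  obtain f where f: "\<exists>i<n. f i \<noteq> 0" "\<forall>i<n. matvec n (mat_entries A) f i = complex_of_real x * f i"
    using assms(2) unfolding eigenvalue_iff_matvec[OF A] by blast
  have "x * sqnorm n f \<le> m * sqnorm n f"
    using bound[of f] sesq_eigenvector[OF f(2)] by simp
  then show ?thesis using sqnorm_pos[OF f(1)] by simp
qed

lemma Max_real_eigenvalue_hermitian:
  assumes A: "A \<in> carrier_mat n n" and h: "hermitian n (mat_entries A)" and n: "0 < n"
  defines "m \<equiv> Max {x :: real. eigenvalue A (complex_of_real x)}"
  shows "eigenvalue A (complex_of_real m)"
    and "\<And>w. Re (sesq n (mat_entries A) w w) \<le> m * sqnorm n w"
proof -
  obtain v m' where v: "\<exists>i<n. v i \<noteq> 0"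
      "\<forall>i<n. matvec n (mat_entries A) v i = complex_of_real m' * v i"
    and bound: "\<And>w. Re (sesq n (mat_entries A) w w) \<le> m' * sqnorm n w"
    by (rule hermitian_top_eigenvector[OF h n]) blast
  have eig: "eigenvalue A (complex_of_real m')"
    unfolding eigenvalue_iff_matvec[OF A] using v by blast
  have "m = m'"
    unfolding m_def
  proof (rule Max_eqI)
    show "finite {x :: real. eigenvalue A (complex_of_real x)}"
      by (rule finite_real_eigenvalues[OF A])
    show "m' \<in> {x :: real. eigenvalue A (complex_of_real x)}"
      using eig by simp
    fix x assume "x \<in> {x :: real. eigenvalue A (complex_of_real x)}"
    then show "x \<le> m'"
      using eigenvalue_le_rayleigh_bound[OF A _ bound] by blast
  qed
  then show "eigenvalue A (complex_of_real m)" "\<And>w. Re (sesq n (mat_entries A) w w) \<le> m * sqnorm n w"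
    using eig bound by simp_all
qed

subsection \<open>Eigenvalues of the Hermitian adjacency matrix\<close>

lemma herm_adj_carrier: "herm_adj n E \<in> carrier_mat n n"
  unfolding herm_adj_def by simp

lemma mat_entries_herm_adj:
  assumes "i < n" "j < n"
  shows "mat_entries (herm_adj n E) i j =
    (if (i, j) \<in> E \<and> (j, i) \<in> E then 1
     else if (i, j) \<in> E then \<i> else if (j, i) \<in> E then - \<i> else 0)"
  using assms unfolding mat_entries_def herm_adj_def by simp

lemma hermitian_herm_adj: "hermitian n (mat_entries (herm_adj n E))"
  unfolding hermitian_def by (simp add: mat_entries_herm_adj)

lemma lambda1_eigenvalue: "0 < n \<Longrightarrow> eigenvalue (herm_adj n E) (complex_of_real (lambda1 n E))"
  unfolding lambda1_def by (rule Max_real_eigenvalue_hermitian(1)[OF herm_adj_carrier hermitian_herm_adj])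

lemma sesq_le_lambda1:
  "0 < n \<Longrightarrow> Re (sesq n (mat_entries (herm_adj n E)) w w) \<le> lambda1 n E * sqnorm n w"
  unfolding lambda1_def by (rule Max_real_eigenvalue_hermitian(2)[OF herm_adj_carrier hermitian_herm_adj])

lemma eigenvalue_le_lambda1:
  assumes "0 < n" "eigenvalue (herm_adj n E) (complex_of_real x)"
  shows "x \<le> lambda1 n E"
  by (rule eigenvalue_le_rayleigh_bound[OF herm_adj_carrier assms(2) sesq_le_lambda1[OF assms(1)]])

text \<open>Without loops the diagonal of \<open>H(X)\<close> vanishes, so a basis vector has Rayleigh quotient \<open>0\<close>.\<close>

lemma lambda1_nonneg:
  assumes "digraph n E" "0 < n"
  shows "0 \<le> lambda1 n E"
proof -
  have "mat_entries (herm_adj n E) 0 0 = 0"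
    using assms unfolding digraph_def by (simp add: mat_entries_herm_adj)
  then show ?thesis
    using sesq_le_lambda1[OF assms(2), of E "basis_fun 0"]
    by (simp add: sesq_basis_fun[OF assms(2)] sqnorm_basis_fun[OF assms(2)])
qed

lemma rho_eq_Max_abs: "rho n E = Max (abs ` {x. eigenvalue (herm_adj n E) (complex_of_real x)})"
  unfolding rho_def setcompr_eq_image ..

lemma rho_attained:
  assumes "0 < n"
  obtains x where "eigenvalue (herm_adj n E) (complex_of_real x)" "rho n E = \<bar>x\<bar>"
proof -
  have "rho n E \<in> abs ` {x. eigenvalue (herm_adj n E) (complex_of_real x)}"
    unfolding rho_eq_Max_abs
    using finite_real_eigenvalues[OF herm_adj_carrier] lambda1_eigenvalue[OF assms]
    by (intro Max_in finite_imageI) blast+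
  then show ?thesis using that by blast
qed

lemma abs_eigenvalue_le_rho:
  assumes "eigenvalue (herm_adj n E) (complex_of_real x)"
  shows "\<bar>x\<bar> \<le> rho n E"
  unfolding rho_eq_Max_abs
  using finite_real_eigenvalues[OF herm_adj_carrier] assms by (intro Max_ge finite_imageI) blast+

lemma lambda1_le_rho: "0 < n \<Longrightarrow> lambda1 n E \<le> rho n E"
  using abs_eigenvalue_le_rho[OF lambda1_eigenvalue] abs_ge_self order_trans by blast

lemma unit_entry_triple_nonneg:
  assumes "c \<in> {0, 1, \<i>, - \<i>}"
  shows "0 \<le> 2 * Re (complex_of_real (cmod a) * c * complex_of_real (cmod b))
             + Re (a * c * cnj b) + Re (cnj a * c * b)"
proof -
  consider "c = 0" | "c = 1" | "c = \<i>" | "c = - \<i>" using assms by auto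
  then show ?thesis
  proof cases
    case 2
    have "\<bar>Re (a * cnj b)\<bar> \<le> cmod a * cmod b"
      using abs_Re_le_cmod[of "a * cnj b"] by (simp add: norm_mult)
    then show ?thesis using 2 by simp
  qed (simp_all add: algebra_simps)
qed

lemma neg_eigenvalue_le_3_lambda1:
  assumes n: "0 < n" and x: "eigenvalue (herm_adj n E) (complex_of_real x)"
  shows "- x \<le> 3 * lambda1 n E"
proof -
  define h where "h = mat_entries (herm_adj n E)"
  obtain f where f: "\<exists>i<n. f i \<noteq> 0" "\<forall>i<n. matvec n h f i = complex_of_real x * f i"
    using x unfolding eigenvalue_iff_matvec[OF herm_adj_carrier] h_def by blast
  define f_abs where "f_abs = (\<lambda>i. complex_of_real (cmod (f i)))"
  define f_cnj where "f_cnj = (\<lambda>i. cnj (f i))"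
  have "2 * Re (sesq n h f_abs f_abs) + Re (sesq n h f_cnj f_cnj) + Re (sesq n h f f)
      = (\<Sum>i<n. \<Sum>j<n. 2 * Re (complex_of_real (cmod (f i)) * h i j * complex_of_real (cmod (f j)))
           + Re (f i * h i j * cnj (f j)) + Re (cnj (f i) * h i j * f j))"
    unfolding sesq_def f_abs_def f_cnj_def by (simp add: Re_sum sum.distrib sum_distrib_left)
  also have "\<dots> \<ge> 0"
    unfolding h_def
    by (intro sum_nonneg unit_entry_triple_nonneg) (auto simp: mat_entries_herm_adj)
  finally have "0 \<le> 2 * Re (sesq n h f_abs f_abs) + Re (sesq n h f_cnj f_cnj) + Re (sesq n h f f)" .
  moreover have "sqnorm n f_abs = sqnorm n f" "sqnorm n f_cnj = sqnorm n f"
    unfolding sqnorm_def f_abs_def f_cnj_def by simp_all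
  ultimately have "0 \<le> (3 * lambda1 n E + x) * sqnorm n f"
    using sesq_le_lambda1[OF n, of E f_abs] sesq_le_lambda1[OF n, of E f_cnj] sesq_eigenvector[OF f(2)]
    unfolding h_def by (simp add: algebra_simps)
  then show ?thesis
    using sqnorm_pos[OF f(1)] by (simp add: zero_le_mult_iff)
qed

lemma rho_le_3_lambda1:
  assumes "digraph n E" "0 < n"
  shows "rho n E \<le> 3 * lambda1 n E"
proof -
  obtain x where x: "eigenvalue (herm_adj n E) (complex_of_real x)" "rho n E = \<bar>x\<bar>"
    using rho_attained[OF assms(2)] by blast
  show ?thesis
    using x eigenvalue_le_lambda1[OF assms(2) x(1)] neg_eigenvalue_le_3_lambda1[OF assms(2) x(1)]
      lambda1_nonneg[OF assms] by linarith
qed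

subsection \<open>Digraphs attaining the bounds\<close>

definition digon_arcs :: "(nat \<times> nat) set" where
  "digon_arcs = {(0, 1), (1, 0)}"

definition cycle_with_diagonals_arcs :: "(nat \<times> nat) set" where
  "cycle_with_diagonals_arcs = {(0, 1), (1, 2), (2, 3), (3, 0), (0, 2), (2, 0), (1, 3), (3, 1)}"

lemma digraph_digon: "digraph 2 digon_arcs"
  unfolding digraph_def digon_arcs_def by auto

lemma digraph_cycle_with_diagonals: "digraph 4 cycle_with_diagonals_arcs"
  unfolding digraph_def cycle_with_diagonals_arcs_def by auto

lemma matvec_digon:
  "matvec 2 (mat_entries (herm_adj 2 digon_arcs)) f 0 = f 1"
  "matvec 2 (mat_entries (herm_adj 2 digon_arcs)) f 1 = f 0"
  unfolding matvec_def by (simp_all add: eval_nat_numeral mat_entries_herm_adj digon_arcs_def)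

lemma matvec_cycle_with_diagonals:
  "matvec 4 (mat_entries (herm_adj 4 cycle_with_diagonals_arcs)) f 0 = \<i> * f 1 + f 2 - \<i> * f 3"
  "matvec 4 (mat_entries (herm_adj 4 cycle_with_diagonals_arcs)) f 1 = - \<i> * f 0 + \<i> * f 2 + f 3"
  "matvec 4 (mat_entries (herm_adj 4 cycle_with_diagonals_arcs)) f 2 = f 0 - \<i> * f 1 + \<i> * f 3"
  "matvec 4 (mat_entries (herm_adj 4 cycle_with_diagonals_arcs)) f 3 = \<i> * f 0 + f 1 - \<i> * f 2"
  unfolding matvec_def
  by (simp_all add: eval_nat_numeral mat_entries_herm_adj cycle_with_diagonals_arcs_def)

lemma eigenvalue_digon:
  assumes "eigenvalue (herm_adj 2 digon_arcs) (complex_of_real x)"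
  shows "\<bar>x\<bar> = 1"
proof -
  obtain f where f: "\<exists>i<2. f i \<noteq> 0"
      "\<forall>i<2. matvec 2 (mat_entries (herm_adj 2 digon_arcs)) f i = complex_of_real x * f i"
    using assms unfolding eigenvalue_iff_matvec[OF herm_adj_carrier] by blast
  have "f 1 = complex_of_real x * f 0" "f 0 = complex_of_real x * f 1"
    using f(2)[rule_format, of 0] f(2)[rule_format, of 1] matvec_digon by simp_all
  then have "(1 - complex_of_real (x\<^sup>2)) * f i = 0" if "i < 2" for i
    using that by (auto simp: less_2_cases_iff power2_eq_square algebra_simps)
  then have "complex_of_real (x\<^sup>2) = 1"
    using f(1) by auto
  then show ?thesis
    by (metis of_real_eq_1_iff power2_eq_1_iff abs_1 abs_neg_one)
qed

lemma eigenvalue_cycle_with_diagonals: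
  assumes "eigenvalue (herm_adj 4 cycle_with_diagonals_arcs) (complex_of_real x)"
  shows "x = 1 \<or> x = -3"
proof -
  define y where "y = complex_of_real x"
  obtain f where f: "\<exists>i<4. f i \<noteq> 0"
      "\<forall>i<4. matvec 4 (mat_entries (herm_adj 4 cycle_with_diagonals_arcs)) f i = y * f i"
    using assms unfolding eigenvalue_iff_matvec[OF herm_adj_carrier] y_def by blast
  then have q: "\<i> * f 1 + f 2 - \<i> * f 3 = y * f 0" "- \<i> * f 0 + \<i> * f 2 + f 3 = y * f 1"
    "f 0 - \<i> * f 1 + \<i> * f 3 = y * f 2" "\<i> * f 0 + f 1 - \<i> * f 2 = y * f 3"
    unfolding matvec_cycle_with_diagonals[symmetric] by auto
  txt \<open>Here \<open>H = I - u u\<^sup>*\<close> with \<open>u = (1, \<i>, -1, -\<i>)\<close>, and \<open>s = u\<^sup>* f\<close>.\<close>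
  define s where "s = f 0 - \<i> * f 1 - f 2 + \<i> * f 3"
  have e: "y * f 0 = f 0 - s" "y * f 1 = f 1 - \<i> * s" "y * f 2 = f 2 + s" "y * f 3 = f 3 + \<i> * s"
    unfolding q[symmetric] s_def by (simp_all add: algebra_simps)
  have "(y + 3) * s = y * f 0 - \<i> * (y * f 1) - y * f 2 + \<i> * (y * f 3) + 3 * s"
    unfolding s_def by (simp add: algebra_simps)
  also have "\<dots> = 0"
    unfolding e unfolding s_def by (simp add: algebra_simps)
  finally have ys: "(y + 3) * s = 0" .
  show ?thesis
  proof (cases "s = 0")
    case True
    have "(y - 1) * f i = 0" if "i < 4" for i
      using that e True by (auto simp: eval_nat_numeral less_Suc_eq algebra_simps)
    then have "y = 1" using f(1) by auto
    then show ?thesis unfolding y_def by simp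
  next
    case False
    then have "y + 3 = 0" using ys by simp
    then have "y = -3" by (simp add: eq_neg_iff_add_eq_0)
    then have "complex_of_real x = complex_of_real (-3)" unfolding y_def by simp
    then show ?thesis using of_real_eq_iff by blast
  qed
qed

lemma eigenvalue_cycle_with_diagonals_neg3:
  "eigenvalue (herm_adj 4 cycle_with_diagonals_arcs) (complex_of_real (-3))"
proof -
  define f :: "nat \<Rightarrow> complex"
    where "f = (\<lambda>i. if i = 0 then 1 else if i = 1 then \<i> else if i = 2 then -1 else - \<i>)"
  have "matvec 4 (mat_entries (herm_adj 4 cycle_with_diagonals_arcs)) f i = complex_of_real (-3) * f i"
    if "i < 4" for i
  proof -
    have "i = 0 \<or> i = 1 \<or> i = 2 \<or> i = 3" using that by auto
    then consider "i = 0" | "i = 1" | "i = 2" | "i = 3" by blast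
    then show ?thesis
    proof cases
      case 1 show ?thesis unfolding 1 matvec_cycle_with_diagonals by (simp add: f_def)
    next
      case 2 show ?thesis unfolding 2 matvec_cycle_with_diagonals by (simp add: f_def)
    next
      case 3 show ?thesis unfolding 3 matvec_cycle_with_diagonals by (simp add: f_def)
    next
      case 4 show ?thesis unfolding 4 matvec_cycle_with_diagonals by (simp add: f_def)
    qed
  qed
  moreover have "\<exists>i<4. f i \<noteq> 0" by (auto simp: f_def)
  ultimately show ?thesis
    unfolding eigenvalue_iff_matvec[OF herm_adj_carrier] by blast
qed

lemma lambda1_eq_rho_digon: "lambda1 2 digon_arcs = rho 2 digon_arcs"
proof -
  have "lambda1 2 digon_arcs = 1"
    using eigenvalue_digon[OF lambda1_eigenvalue] lambda1_nonneg[OF digraph_digon] by force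
  moreover obtain x where "eigenvalue (herm_adj 2 digon_arcs) (complex_of_real x)"
      "rho 2 digon_arcs = \<bar>x\<bar>"
    using rho_attained[of 2] by auto
  ultimately show ?thesis using eigenvalue_digon by simp
qed

lemma rho_eq_3_lambda1_cycle_with_diagonals:
  "rho 4 cycle_with_diagonals_arcs = 3 * lambda1 4 cycle_with_diagonals_arcs"
proof -
  have "lambda1 4 cycle_with_diagonals_arcs = 1"
    using eigenvalue_cycle_with_diagonals[OF lambda1_eigenvalue]
      lambda1_nonneg[OF digraph_cycle_with_diagonals] by force
  moreover obtain x where "eigenvalue (herm_adj 4 cycle_with_diagonals_arcs) (complex_of_real x)"
      "rho 4 cycle_with_diagonals_arcs = \<bar>x\<bar>"
    using rho_attained[of 4] by auto
  then have "rho 4 cycle_with_diagonals_arcs \<le> 3"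
    using eigenvalue_cycle_with_diagonals by force
  moreover have "3 \<le> rho 4 cycle_with_diagonals_arcs"
    using abs_eigenvalue_le_rho[OF eigenvalue_cycle_with_diagonals_neg3] by simp
  ultimately show ?thesis by simp
qed

theorem theorem5p6:
  shows "(\<forall>n E. digraph n E \<and> n \<ge> 1 \<longrightarrow>
            lambda1 n E \<le> rho n E \<and> rho n E \<le> 3 * lambda1 n E)
       \<and> (\<exists>n E. digraph n E \<and> E \<noteq> {} \<and> lambda1 n E = rho n E)
       \<and> (\<exists>n E. digraph n E \<and> E \<noteq> {} \<and> rho n E = 3 * lambda1 n E)"
proof (intro conjI)
  show "\<forall>n E. digraph n E \<and> n \<ge> 1 \<longrightarrow> lambda1 n E \<le> rho n E \<and> rho n E \<le> 3 * lambda1 n E"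
    using lambda1_le_rho rho_le_3_lambda1 by auto
  show "\<exists>n E. digraph n E \<and> E \<noteq> {} \<and> lambda1 n E = rho n E"
    using digraph_digon lambda1_eq_rho_digon by (auto simp: digon_arcs_def)
  show "\<exists>n E. digraph n E \<and> E \<noteq> {} \<and> rho n E = 3 * lambda1 n E"
    using digraph_cycle_with_diagonals rho_eq_3_lambda1_cycle_with_diagonals
    by (auto simp: cycle_with_diagonals_arcs_def)
qed

end
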